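(* With $V=V(z,1)$, $u_1=u_1(z)=1/(1-V(z,1))$ and \[ Q(z)=\frac{V(z,1)^2}{u_1(z)-1}-\frac{u_1(z)B(z,1,1)}{u_1(z)-1}+z\,u_1(z), \] the partial derivatives of $B$ satisfy \[ B_x(z,1,1)=\frac{u_1(z)-1}{u_1(z)}\,Q(z)\big(1-Q(z)\big),\qquad B_z(z,1,1)=\frac{u_1(z)-1}{z\,u_1(z)}\,Q(z)\big(1-Q(z)\big)+u_1(z)-1 . \]
   Context: $B(z,x,u)$ is the generating function of rooted 2-connected planar maps (no cut vertex; loops and multiple edges allowed) excluding the single-edge and single-loop maps, with $z$ marking edges, $x$ non-root faces and $u$ the root face valency; explicitly \[ B=-\tfrac12\big(1-(1+U-V+UV-2U^2V)u+U(1-V)^2u^2\big)+\tfrac12\big(1-(1-V)u\big)\sqrt{1-2U(1+V-2UV)u+U^2(1-V)^2u^2}, \] where $U=U(z,x)$, $V=V(z,x)$ are the power series determined by $z=U(1-V)^2$, $xz=V(1-U)^2$. $B_x,B_z$ are partial derivatives. *)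

theory Defs
  imports "HOL-Computational_Algebra.Polynomial"
          "HOL-Computational_Algebra.Formal_Laurent_Series"
begin

text \<open>Bivariate power series in z and x are represented as power series in z whose
  coefficients are real polynomials in x (type real poly fps).
  The variable x is the polynomial [:0,1:].\<close>

type_synonym bser = "real poly fps"

definition xvar :: bser where "xvar = fps_const [:0, 1:]"

definition UV_system :: "bser \<Rightarrow> bser \<Rightarrow> bool" where
  "UV_system U V \<longleftrightarrow> U $ 0 = 0 \<and> V $ 0 = 0 \<and>
     fps_X = U * (1 - V)^2 \<and> xvar * fps_X = V * (1 - U)^2"

definition ser_sqrt :: "bser \<Rightarrow> bser" where
  "ser_sqrt D = (THE S. S^2 = D \<and> S $ 0 = 1)"

text \<open>B(z,x,u) for a fixed real value u of the root-face variable.\<close>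
definition Bser :: "bser \<Rightarrow> bser \<Rightarrow> real \<Rightarrow> bser" where
  "Bser U V u = (let c = (\<lambda>r::real. fps_const [:r:]) in
     - fps_const [:1/2:] * (1 - (1 + U - V + U*V - 2*U^2*V) * c u + U * (1 - V)^2 * c u ^ 2)
     + fps_const [:1/2:] * (1 - (1 - V) * c u) *
         ser_sqrt (1 - 2 * U * (1 + V - 2*U*V) * c u + U^2 * (1 - V)^2 * c u ^ 2))"

definition dx :: "bser \<Rightarrow> bser" where "dx F = Abs_fps (\<lambda>n. pderiv (F $ n))"

definition dz :: "bser \<Rightarrow> bser" where "dz F = fps_deriv F"

text \<open>Specialisation x = 1, yielding a univariate series in z, viewed as a Laurent series
  (so that division is exact).\<close>
definition at_x1 :: "bser \<Rightarrow> real fls" where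
  "at_x1 F = fps_to_fls (Abs_fps (\<lambda>n. poly (F $ n) 1))"

end

theory Submission
  imports Defs
begin

text \<open>At \<open>u = 1\<close> the discriminant of \<open>B\<close> is the perfect square \<open>(1 - U - U V)\<^sup>2\<close>, so
  \<open>B(z,x,1) = U V (1 - U - V)\<close>. At \<open>x = 1\<close> the system for \<open>U, V\<close> becomes symmetric and
  forces \<open>U = V = W\<close> with \<open>z = W (1 - W)\<^sup>2\<close>. Differentiating the system in \<open>x\<close> and in \<open>z\<close>
  and evaluating at \<open>x = 1\<close> expresses \<open>B\<^sub>x\<close> and \<open>B\<^sub>z\<close> as rational functions of \<open>W\<close>; finally
  \<open>Q = W\<close>, and both identities reduce to field arithmetic in \<open>W\<close>.\<close>

definition eval_x1 :: "bser \<Rightarrow> real fps" where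
  "eval_x1 F = Abs_fps (\<lambda>n. poly (F $ n) 1)"

lemma at_x1_eq_fps_to_fls: "at_x1 F = fps_to_fls (eval_x1 F)"
  by (simp add: at_x1_def eval_x1_def)

lemma eval_x1_nth [simp]: "eval_x1 F $ n = poly (F $ n) 1"
  by (simp add: eval_x1_def)

lemma eval_x1_add [simp]: "eval_x1 (F + G) = eval_x1 F + eval_x1 G"
  by (rule fps_ext) simp

lemma eval_x1_diff [simp]: "eval_x1 (F - G) = eval_x1 F - eval_x1 G"
  by (rule fps_ext) simp

lemma eval_x1_mult [simp]: "eval_x1 (F * G) = eval_x1 F * eval_x1 G"
  by (rule fps_ext) (simp add: fps_mult_nth poly_sum)

lemma eval_x1_zero [simp]: "eval_x1 0 = 0"
  by (rule fps_ext) simp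

lemma eval_x1_one [simp]: "eval_x1 1 = 1"
  by (rule fps_ext) simp

lemma eval_x1_numeral [simp]: "eval_x1 (numeral n) = numeral n"
  by (rule fps_ext) (simp add: numeral_fps_const)

lemma eval_x1_power [simp]: "eval_x1 (F ^ n) = eval_x1 F ^ n"
  by (induction n) auto

lemma eval_x1_X [simp]: "eval_x1 fps_X = fps_X"
  by (rule fps_ext) (simp add: fps_X_nth)

lemma eval_x1_xvar [simp]: "eval_x1 xvar = 1"
  by (rule fps_ext) (simp add: xvar_def)

lemma eval_x1_fps_deriv [simp]: "eval_x1 (fps_deriv F) = fps_deriv (eval_x1 F)"
  by (rule fps_ext) (simp add: of_nat_poly)

lemma pderiv_sum: "pderiv (\<Sum>i\<in>A. f i) = (\<Sum>i\<in>A. pderiv (f i))"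
  by (induction A rule: infinite_finite_induct) (auto simp: pderiv_add)

lemma dx_add [simp]: "dx (F + G) = dx F + dx G"
  by (rule fps_ext) (simp add: dx_def pderiv_add)

lemma dx_diff [simp]: "dx (F - G) = dx F - dx G"
  by (rule fps_ext) (simp add: dx_def pderiv_diff)

lemma dx_mult [simp]: "dx (F * G) = dx F * G + F * dx G"
proof (rule fps_ext)
  fix n
  have "dx (F * G) $ n =
      (\<Sum>i=0..n. pderiv (F $ i) * G $ (n - i) + F $ i * pderiv (G $ (n - i)))"
    by (simp add: dx_def fps_mult_nth pderiv_sum pderiv_mult mult.commute add.commute)
  also have "\<dots> = (dx F * G + F * dx G) $ n"
    by (simp add: dx_def fps_mult_nth sum.distrib)
  finally show "dx (F * G) $ n = (dx F * G + F * dx G) $ n" .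
qed

lemma dx_one [simp]: "dx 1 = 0"
  by (rule fps_ext) (simp add: dx_def)

lemma dx_numeral [simp]: "dx (numeral n) = 0"
  by (rule fps_ext) (simp add: dx_def numeral_fps_const numeral_poly pderiv_pCons)

lemma dx_X [simp]: "dx fps_X = 0"
  by (rule fps_ext) (simp add: dx_def fps_X_nth)

lemma dx_xvar [simp]: "dx xvar = 1"
  by (rule fps_ext) (simp add: dx_def xvar_def pderiv_pCons)

lemma dx_power2 [simp]: "dx (F ^ 2) = 2 * F * dx F"
  by (simp add: power2_eq_square algebra_simps)

lemma ser_sqrt_unique:
  assumes "S ^ 2 = D" "S $ 0 = 1"
  shows "ser_sqrt D = S"
  unfolding ser_sqrt_def
proof (rule the_equality)
  fix T assume T: "T ^ 2 = D \<and> T $ 0 = 1"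
  have "(T - S) * (T + S) = 0"
    using T assms by (simp add: algebra_simps power2_eq_square)
  moreover have "T + S \<noteq> 0"
    using T assms by (intro fps_nonzeroI[of _ 0]) (simp add: poly_eq_iff)
  ultimately show "T = S" by simp
qed (use assms in simp)

lemma Bser_root_face_1:
  assumes "U $ 0 = 0"
  shows "Bser U V 1 = U * V * (1 - U - V)"
proof -
  have const_1: "fps_const [:1::real:] = 1"
    by (simp add: one_pCons[symmetric])
  have half: "fps_const [:1/2::real:] * 2 = 1"
    by (simp add: numeral_fps_const numeral_poly fps_const_mult[symmetric]
        flip: fps_const_1_eq_1)
  have sqrt: "ser_sqrt (1 - 2 * U * (1 + V - 2 * U * V) * 1 + U ^ 2 * (1 - V) ^ 2 * 1 ^ 2)
      = 1 - U - U * V"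
    by (rule ser_sqrt_unique) (simp_all add: assms power2_eq_square algebra_simps)
  have factored: "\<And>h::bser.
      - h * (1 - (1 + U - V + U * V - 2 * U ^ 2 * V) * 1 + U * (1 - V) ^ 2 * 1 ^ 2)
      + h * (1 - (1 - V) * 1) * (1 - U - U * V) = (h * 2) * (U * V * (1 - U - V))"
    by (simp add: algebra_simps power2_eq_square)
  show ?thesis
    unfolding Bser_def Let_def const_1 sqrt factored half by simp
qed

lemma UV_system_eval_x1:
  assumes "UV_system U V"
  shows "fps_X = eval_x1 U * (1 - eval_x1 V) ^ 2"
    and "fps_X = eval_x1 V * (1 - eval_x1 U) ^ 2"
proof -
  have "fps_X = U * (1 - V) ^ 2" "xvar * fps_X = V * (1 - U) ^ 2"
    using assms by (simp_all add: UV_system_def)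
  from this[THEN arg_cong, of eval_x1] show
    "fps_X = eval_x1 U * (1 - eval_x1 V) ^ 2" "fps_X = eval_x1 V * (1 - eval_x1 U) ^ 2"
    by simp_all
qed

lemma UV_system_eval_x1_diagonal:
  assumes "UV_system U V"
  shows "eval_x1 V = eval_x1 U"
proof -
  have "(eval_x1 U - eval_x1 V) * (1 - eval_x1 U * eval_x1 V) = 0"
    using UV_system_eval_x1[OF assms] by (simp add: algebra_simps power2_eq_square)
  moreover have "1 - eval_x1 U * eval_x1 V \<noteq> 0"
    using assms by (intro fps_nonzeroI[of _ 0]) (simp add: UV_system_def)
  ultimately show ?thesis by simp
qed

lemma UV_system_eval_x1_X:
  assumes "UV_system U V"
  shows "fps_X = eval_x1 U * (1 - eval_x1 U) ^ 2"
  using UV_system_eval_x1(2)[OF assms] UV_system_eval_x1_diagonal[OF assms] by simp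

text \<open>With \<open>W = U(z,1)\<close>, the factor \<open>(1 - W) (1 - 3 W)\<close> is the derivative of \<open>W (1 - W)\<^sup>2\<close>;
  it appears both when differentiating the system in \<open>z\<close> and, after adding the two
  equations, when differentiating it in \<open>x\<close>.\<close>

lemma UV_system_eval_x1_dx:
  assumes "UV_system U V"
  shows "(eval_x1 (dx U) + eval_x1 (dx V)) * ((1 - eval_x1 U) * (1 - 3 * eval_x1 U)) = fps_X"
proof -
  define W r s where "W = eval_x1 U" and "r = eval_x1 (dx U)" and "s = eval_x1 (dx V)"
  have VW: "eval_x1 V = W"
    using UV_system_eval_x1_diagonal[OF assms] by (simp add: W_def)
  have "dx fps_X = dx (U * (1 - V) ^ 2)" "dx (xvar * fps_X) = dx (V * (1 - U) ^ 2)"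
    using assms by (simp_all add: UV_system_def)
  from this[THEN arg_cong, of eval_x1]
  have "0 = r * (1 - W) ^ 2 - 2 * W * (1 - W) * s"
    and "fps_X = s * (1 - W) ^ 2 - 2 * W * (1 - W) * r"
    by (simp_all add: VW W_def[symmetric] r_def[symmetric] s_def[symmetric]
        algebra_simps power2_eq_square)
  then have "fps_X = (r * (1 - W) ^ 2 - 2 * W * (1 - W) * s) +
      (s * (1 - W) ^ 2 - 2 * W * (1 - W) * r)"
    by simp
  then show ?thesis
    unfolding W_def[symmetric] r_def[symmetric] s_def[symmetric]
    by (simp add: algebra_simps power2_eq_square)
qed

lemma UV_system_eval_x1_dz:
  assumes "UV_system U V"
  shows "fps_deriv (eval_x1 U) * ((1 - eval_x1 U) * (1 - 3 * eval_x1 U)) = 1"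
proof -
  define W where "W = eval_x1 U"
  have VW: "eval_x1 V = W"
    using UV_system_eval_x1_diagonal[OF assms] by (simp add: W_def)
  have "fps_deriv (fps_X :: real fps) = fps_deriv (W * (1 - W) ^ 2)"
    using UV_system_eval_x1_X[OF assms] by (simp add: W_def)
  then show ?thesis
    unfolding W_def[symmetric] by (simp add: algebra_simps power2_eq_square)
qed

lemma Bser_eval_x1:
  assumes "UV_system U V"
  defines "W \<equiv> eval_x1 U"
  shows "eval_x1 (Bser U V 1) = W ^ 2 * (1 - 2 * W)"
    and "eval_x1 (dx (Bser U V 1)) * (1 - W) = W * fps_X"
    and "eval_x1 (dz (Bser U V 1)) * (1 - W) = 2 * W"
proof -
  have B: "Bser U V 1 = U * V * (1 - U - V)"
    using assms(1) by (simp add: Bser_root_face_1 UV_system_def)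
  have VW: "eval_x1 V = W"
    using UV_system_eval_x1_diagonal[OF assms(1)] by (simp add: W_def)
  show "eval_x1 (Bser U V 1) = W ^ 2 * (1 - 2 * W)"
    unfolding B by (simp add: VW W_def[symmetric] algebra_simps power2_eq_square)
  have "eval_x1 (dx (Bser U V 1)) * (1 - W) =
      W * ((eval_x1 (dx U) + eval_x1 (dx V)) * ((1 - W) * (1 - 3 * W)))"
    unfolding B by (simp add: VW W_def[symmetric] algebra_simps power2_eq_square)
  then show "eval_x1 (dx (Bser U V 1)) * (1 - W) = W * fps_X"
    using UV_system_eval_x1_dx[OF assms(1)] by (simp add: W_def)
  have "eval_x1 (dz (Bser U V 1)) * (1 - W) =
      2 * W * (fps_deriv W * ((1 - W) * (1 - 3 * W)))"
    unfolding B dz_def by (simp add: VW W_def[symmetric] algebra_simps power2_eq_square)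
  then show "eval_x1 (dz (Bser U V 1)) * (1 - W) = 2 * W"
    using UV_system_eval_x1_dz[OF assms(1)] by (simp add: W_def)
qed

lemma derivatives_in_terms_of_Q:
  fixes w z b bx bz :: "'a::field"
  assumes w: "w \<noteq> 0" and w1: "1 - w \<noteq> 0"
    and z: "z = w * (1 - w) ^ 2" and b: "b = w ^ 2 * (1 - 2 * w)"
    and bx: "bx * (1 - w) = w * z" and bz: "bz * (1 - w) = 2 * w"
  defines "u1 \<equiv> 1 / (1 - w)"
  defines "Q \<equiv> w ^ 2 / (u1 - 1) - u1 * b / (u1 - 1) + z * u1"
  shows "bx = (u1 - 1) / u1 * Q * (1 - Q) \<and>
         bz = (u1 - 1) / (z * u1) * Q * (1 - Q) + u1 - 1"
proof -
  have u1: "u1 - 1 = w / (1 - w)"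
    using w1 by (simp add: u1_def field_simps)
  have zu1: "z * u1 = w * (1 - w)"
    using w1 by (simp add: z u1_def field_simps power2_eq_square)
  have Q: "Q = w"
    unfolding Q_def zu1 u1 b using w w1 by (simp add: u1_def field_simps power2_eq_square)
  have ratio: "(u1 - 1) / u1 = w"
    unfolding u1 using w1 by (simp add: u1_def field_simps)
  have ratio_z: "(u1 - 1) / (z * u1) = 1 / (1 - w) ^ 2"
  proof -
    have "\<And>c. c \<noteq> 0 \<Longrightarrow> (w / c) / (w * c) = 1 / c ^ 2"
      using w by (simp add: field_simps power2_eq_square)
    then show ?thesis
      unfolding u1 zu1 using w1 by blast
  qed
  have bx_w: "bx = w * w * (1 - w)"
  proof -
    have "bx * (1 - w) = (w * w * (1 - w)) * (1 - w)"
      using bx by (simp add: z power2_eq_square algebra_simps)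
    then show ?thesis
      using w1 by simp
  qed
  have cancel: "1 / (1 - w) ^ 2 * w * (1 - w) = w / (1 - w)"
  proof -
    have "\<And>c. c \<noteq> 0 \<Longrightarrow> 1 / c ^ 2 * w * c = w / c"
      by (simp add: field_simps power2_eq_square)
    then show ?thesis
      using w1 by blast
  qed
  have bz_w: "bz = w / (1 - w) + w / (1 - w)"
  proof -
    have "bz = 2 * w / (1 - w)"
      using bz w1 by (simp add: eq_divide_eq)
    then show ?thesis
      by (simp only: add_divide_distrib[symmetric] mult_2)
  qed
  show ?thesis
  proof
    show "bx = (u1 - 1) / u1 * Q * (1 - Q)"
      unfolding Q ratio bx_w by (simp add: algebra_simps)
    have "(u1 - 1) / (z * u1) * Q * (1 - Q) + u1 - 1 = 1 / (1 - w) ^ 2 * w * (1 - w) + (u1 - 1)"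
      unfolding Q ratio_z by (simp only: add_diff_eq)
    also have "\<dots> = bz"
      unfolding cancel u1 bz_w ..
    finally show "bz = (u1 - 1) / (z * u1) * Q * (1 - Q) + u1 - 1" ..
  qed
qed

theorem lemma4p2:
  fixes U V :: bser
  assumes "UV_system U V"
  defines "u1 \<equiv> 1 / (1 - at_x1 V)"
  defines "Q \<equiv> (at_x1 V)^2 / (u1 - 1) - u1 * at_x1 (Bser U V 1) / (u1 - 1) + fls_X * u1"
  shows "at_x1 (dx (Bser U V 1)) = (u1 - 1) / u1 * Q * (1 - Q) \<and>
         at_x1 (dz (Bser U V 1)) = (u1 - 1) / (fls_X * u1) * Q * (1 - Q) + u1 - 1"
proof -
  define W where "W = eval_x1 U"
  have X: "fps_X = W * (1 - W) ^ 2"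
    using UV_system_eval_x1_X[OF assms(1)] by (simp add: W_def)
  have "1 - W \<noteq> 0"
    using assms(1) by (intro fps_nonzeroI[of _ 0]) (simp add: W_def UV_system_def)
  then have "1 - fps_to_fls W \<noteq> 0"
    by (metis fps_to_fls_eq_0_iff fps_to_fls_minus fps_one_to_fls)
  moreover have "fps_to_fls W \<noteq> 0"
    using X by auto
  moreover note X[THEN arg_cong, of fps_to_fls]
    Bser_eval_x1[OF assms(1), folded W_def, THEN arg_cong, of fps_to_fls]
  moreover have "at_x1 V = fps_to_fls W"
    using UV_system_eval_x1_diagonal[OF assms(1)] by (simp add: at_x1_eq_fps_to_fls W_def)
  ultimately show ?thesis
    unfolding Q_def u1_def
    by (intro derivatives_in_terms_of_Q)
      (simp_all add: at_x1_eq_fps_to_fls fls_times_fps_to_fls fps_to_fls_power)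
qed

end
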